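(* Let $d\ge 1$, $\Lambda=(0,+\infty)$, and let $\chi\colon\Lambda\to\mathbb{R}_+^d$ be a continuous bounded function with $\operatorname{supp}\chi=[\lambda_{\min},\lambda_{\max}]$, where $0\le\lambda_{\min}<\lambda_{\max}<\infty$, and $\chi(\lambda)\neq\mathbf{0}$ for $\lambda\in(\lambda_{\min},\lambda_{\max})$. Let $\eta(\lambda)=\chi(\lambda)/\langle\mathbf{1},\chi(\lambda)\rangle$ for $\lambda\in(\lambda_{\min},\lambda_{\max})$, and assume $\eta$ extends continuously to $[\lambda_{\min},\lambda_{\max}]$. Let $\mathcal{P}=\{\int_\Lambda\chi\,\mathrm{d}\mu:\mu \text{ a finite nonnegative Borel measure on }\Lambda\}$, assume $\mathcal{P}$ has nonempty interior, let $A=\{\mathbf{x}\in\mathbb{R}^d:\langle\mathbf{x},\mathbf{1}\rangle=1\}$ and $\mathcal{T}=\mathcal{P}\cap A$. Then \[ \operatorname{int}\operatorname{conv}\bigl(\eta([\lambda_{\min},\lambda_{\max}])\bigr)\subset\mathcal{T}\subset\operatorname{conv}\bigl(\eta([\lambda_{\min},\lambda_{\max}])\bigr), \] where the interior is taken relative to the hyperplane $A$.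
   Context: $\mathbf{1}$ is the all-ones vector and $\langle\cdot,\cdot\rangle$ the dot product. $\mathcal{P}$ is called the color cone, $\mathcal{T}$ the color triangle, and $\eta([\lambda_{\min},\lambda_{\max}])$ the spectral locus. Subsets of $A$ are considered with the relative topology of $A$. *)

theory Defs
  imports "HOL-Analysis.Analysis"
begin

definition ones :: "real ^ 'n" where
  "ones = (\<chi> i. 1)"

definition color_cone :: "(real \<Rightarrow> real ^ 'n) \<Rightarrow> (real ^ 'n) set" where
  "color_cone chi =
     {integral\<^sup>L M chi | M :: real measure.
        sets M = sets (restrict_space borel {0<..}) \<and> finite_measure M}"

definition hyperplane_A :: "(real ^ 'n) set" where
  "hyperplane_A = {x. x \<bullet> ones = 1}"

definition color_triangle :: "(real \<Rightarrow> real ^ 'n) \<Rightarrow> (real ^ 'n) set" where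
  "color_triangle chi = color_cone chi \<inter> hyperplane_A"

end

theory Submission
  imports Defs
begin

text \<open>A point of the color triangle is the integral of \<open>chi = \<langle>1, chi\<rangle>
  eta\<close> against a finite measure. A hyperplane strictly separating it from the
  compact convex hull of the spectral locus would separate every value of
  \<open>chi\<close>, hence, after integration, the point from itself. Conversely, a
  convex combination of points \<open>eta l\<close> with \<open>l\<close> in the open
  interval is the integral of \<open>chi\<close> against a weighted sum of Dirac measures,
  so the convex hull \<open>D\<close> of \<open>eta((lmin, lmax))\<close> lies in the
  triangle. By continuity of \<open>eta\<close> the closure of \<open>D\<close> contains
  the convex hull of the whole locus, and a convex set has the same relative interior as
  its closure.\<close>

lemma inner_ones_pos:
  fixes v :: "real ^ 'n"
  assumes "\<And>i. 0 \<le> v $ i" and "v \<noteq> 0"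
  shows "0 < ones \<bullet> v"
proof -
  have sum: "ones \<bullet> v = (\<Sum>i\<in>UNIV. v $ i)"
    by (simp add: inner_vec_def ones_def)
  have "ones \<bullet> v \<noteq> 0"
  proof
    assume "ones \<bullet> v = 0"
    then have "\<forall>i. v $ i = 0"
      using sum assms(1) by (simp add: sum_nonneg_eq_0_iff)
    with assms(2) show False
      by (simp add: vec_eq_iff)
  qed
  moreover have "0 \<le> ones \<bullet> v"
    using sum assms(1) by (simp add: sum_nonneg)
  ultimately show ?thesis
    by simp
qed

lemma hyperplane_A_eq: "hyperplane_A = {x. ones \<bullet> x = 1}"
  by (simp add: hyperplane_A_def inner_commute)

lemma closed_hyperplane_A: "closed hyperplane_A"
  unfolding hyperplane_A_eq by (rule closed_hyperplane)

lemma affine_hyperplane_A: "affine hyperplane_A"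
  unfolding hyperplane_A_eq by (rule affine_hyperplane)

lemma nonzero_in_interior_closure_support:
  fixes f :: "'a::topological_space \<Rightarrow> 'b::{t1_space, zero}"
  assumes "continuous_on S f" and "open S" and "x \<in> S" and "f x \<noteq> 0"
  shows "x \<in> interior (closure {x \<in> S. f x \<noteq> 0})"
proof -
  have "{x \<in> S. f x \<noteq> 0} = S \<inter> f -` (- {0})"
    by auto
  then have "open {x \<in> S. f x \<noteq> 0}"
    using continuous_open_preimage[OF assms(1,2)] by (simp add: open_Compl)
  then have "{x \<in> S. f x \<noteq> 0} \<subseteq> interior (closure {x \<in> S. f x \<noteq> 0})"
    by (simp add: closure_subset interior_maximal)
  with assms(3,4) show ?thesis
    by blast
qed

lemma interior_of_subset_rel_interior:
  fixes D :: "'a::euclidean_space set"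
  assumes "convex D" and "affine A" and "D \<subseteq> A" and "C \<subseteq> closure D"
  shows "top_of_set A interior_of C \<subseteq> rel_interior D"
proof
  fix x assume "x \<in> top_of_set A interior_of C"
  then obtain U where U: "open U" "x \<in> U \<inter> A" "U \<inter> A \<subseteq> C"
    by (auto simp: interior_of_def openin_open)
  have "affine hull (closure D) \<subseteq> A"
    using assms(2,3) by (simp add: hull_minimal)
  then have "U \<inter> affine hull (closure D) \<subseteq> closure D"
    using U(3) assms(4) by blast
  with U have "x \<in> rel_interior (closure D)"
    unfolding mem_rel_interior using assms(4) by blast
  with assms(1) show "x \<in> rel_interior D"
    by (simp add: convex_rel_interior_closure)
qed

lemma image_atLeastAtMost_subset_closure_image:
  fixes f :: "real \<Rightarrow> 'a::topological_space"
  assumes "continuous_on {a..b} f" and "a < b"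
  shows "f ` {a..b} \<subseteq> closure (f ` {a<..<b})"
  using image_closure_subset[of "{a<..<b}" f "closure (f ` {a<..<b})"] assms
    closure_subset[of "f ` {a<..<b}"]
  by simp

lemma integral_mem_closed_convex:
  fixes f :: "'a \<Rightarrow> 'b::euclidean_space"
  assumes "integrable M f" and "closed C" and "convex C"
    and "\<And>y. y \<in> C \<Longrightarrow> u \<bullet> y = 1"
    and "\<And>x. x \<in> space M \<Longrightarrow> \<exists>c\<ge>0. \<exists>y\<in>C. f x = c *\<^sub>R y"
    and "u \<bullet> integral\<^sup>L M f = 1"
  shows "integral\<^sup>L M f \<in> C"
proof (rule ccontr)
  assume "integral\<^sup>L M f \<notin> C"
  then obtain a b where sep: "a \<bullet> integral\<^sup>L M f < b" "\<And>y. y \<in> C \<Longrightarrow> b < a \<bullet> y"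
    using separating_hyperplane_closed_point[OF assms(3,2)] by metis
  have "b * (u \<bullet> f x) \<le> a \<bullet> f x" if x: "x \<in> space M" for x
  proof -
    obtain c y where "0 \<le> c" "y \<in> C" "f x = c *\<^sub>R y"
      using assms(5)[OF x] by blast
    moreover from this have "c * b \<le> c * (a \<bullet> y)"
      using sep(2) by (simp add: mult_left_mono less_imp_le)
    ultimately show ?thesis
      using assms(4) by (simp add: mult.commute)
  qed
  then have "(\<integral>x. b * (u \<bullet> f x) \<partial>M) \<le> (\<integral>x. a \<bullet> f x \<partial>M)"
    using assms(1) by (intro integral_mono) auto
  then have "b \<le> a \<bullet> integral\<^sup>L M f"
    using assms(1,6) by simp
  with sep(1) show False
    by simp
qed

lemma color_triangle_subset_closed_convex:
  fixes chi :: "real \<Rightarrow> real ^ 'n"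
  assumes "continuous_on {0<..} chi" and "bounded (chi ` {0<..})"
    and "closed C" and "convex C" and "C \<subseteq> hyperplane_A"
    and "\<And>l. 0 < l \<Longrightarrow> \<exists>c\<ge>0. \<exists>y\<in>C. chi l = c *\<^sub>R y"
  shows "color_triangle chi \<subseteq> C"
proof
  fix x assume "x \<in> color_triangle chi"
  then obtain M :: "real measure" where x: "x = integral\<^sup>L M chi" "ones \<bullet> x = 1"
    and sets_M: "sets M = sets (restrict_space borel {0<..})" and "finite_measure M"
    unfolding color_triangle_def color_cone_def hyperplane_A_eq by auto
  have space_M: "space M = {0<..}"
    using sets_eq_imp_space_eq[OF sets_M] by simp
  have "chi \<in> borel_measurable M"
    using borel_measurable_continuous_on_restrict[OF assms(1)] measurable_cong_sets[OF sets_M refl]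
    by blast
  moreover obtain B where "\<And>l. l \<in> {0<..} \<Longrightarrow> norm (chi l) \<le> B"
    using assms(2) unfolding bounded_iff by auto
  ultimately have "integrable M chi"
    using finite_measure.integrable_const_bound[OF \<open>finite_measure M\<close>, of chi B] space_M by auto
  with x show "x \<in> C"
    using integral_mem_closed_convex[of M chi C ones] assms(3-6) space_M
    unfolding hyperplane_A_eq by auto
qed

lemma sum_scaleR_mem_color_cone:
  fixes chi :: "real \<Rightarrow> real ^ 'n"
  assumes "continuous_on {0<..} chi" and "finite L" and "L \<subseteq> {0<..}"
    and "\<And>l. l \<in> L \<Longrightarrow> 0 \<le> w l"
  shows "(\<Sum>l\<in>L. w l *\<^sub>R chi l) \<in> color_cone chi"
proof -
  define N where "N = restrict_space (borel :: real measure) {0<..}"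
  define P where "P = point_measure L (\<lambda>l. ennreal (w l))"
  have id_measurable: "id \<in> measurable P N"
    using assms(3) by (auto simp: P_def N_def point_measure_def space_restrict_space)
  have "finite_measure P"
    using assms(2) by (intro finite_measureI)
      (simp add: P_def emeasure_point_measure_finite space_point_measure)
  then have "finite_measure (distr P N id)"
    using id_measurable by (rule finite_measure.finite_measure_distr)
  moreover have "integral\<^sup>L (distr P N id) chi = (\<Sum>l\<in>L. w l *\<^sub>R chi l)"
  proof -
    have "chi \<in> borel_measurable N"
      unfolding N_def by (rule borel_measurable_continuous_on_restrict[OF assms(1)])
    then have "integral\<^sup>L (distr P N id) chi = integral\<^sup>L P chi"
      using integral_distr[OF id_measurable] by simp
    also have "\<dots> = integral\<^sup>L (count_space L) (\<lambda>l. w l *\<^sub>R chi l)"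
      unfolding P_def point_measure_def using assms(4)
      by (intro integral_density) (auto simp: AE_count_space)
    also have "\<dots> = (\<Sum>l\<in>L. w l *\<^sub>R chi l)"
      using assms(2) by (rule lebesgue_integral_count_space_finite)
    finally show ?thesis .
  qed
  ultimately show ?thesis
    unfolding color_cone_def N_def by (metis (mono_tags, lifting) mem_Collect_eq sets_distr)
qed

lemma convex_hull_normalized_subset_color_triangle:
  fixes chi :: "real \<Rightarrow> real ^ 'n"
  assumes "continuous_on {0<..} chi" and "I \<subseteq> {0<..}"
    and "\<And>l. l \<in> I \<Longrightarrow> 0 < ones \<bullet> chi l"
  shows "convex hull ((\<lambda>l. chi l /\<^sub>R (ones \<bullet> chi l)) ` I) \<subseteq> color_triangle chi"
proof -
  define eta where "eta = (\<lambda>l. chi l /\<^sub>R (ones \<bullet> chi l))"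
  have "eta l \<in> hyperplane_A" if "l \<in> I" for l
    using assms(3)[OF that] by (simp add: eta_def hyperplane_A_eq)
  then have "eta ` I \<subseteq> hyperplane_A"
    by blast
  then have "convex hull (eta ` I) \<subseteq> hyperplane_A"
    by (simp add: hull_minimal affine_imp_convex affine_hyperplane_A)
  moreover have "convex hull (eta ` I) \<subseteq> color_cone chi"
  proof
    fix y assume "y \<in> convex hull (eta ` I)"
    then obtain S u where S: "finite S" "S \<subseteq> eta ` I" "\<forall>v\<in>S. 0 \<le> u v"
      and y: "y = (\<Sum>v\<in>S. u v *\<^sub>R v)"
      unfolding convex_hull_explicit by blast
    then obtain L where L: "L \<subseteq> I" "inj_on eta L" "S = eta ` L"
      by (meson subset_image_inj)
    have "y = (\<Sum>l\<in>L. u (eta l) *\<^sub>R eta l)"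
      using y L(2,3) by (simp add: sum.reindex)
    also have "\<dots> = (\<Sum>l\<in>L. (u (eta l) / (ones \<bullet> chi l)) *\<^sub>R chi l)"
      by (simp add: eta_def divide_inverse)
    also have "\<dots> \<in> color_cone chi"
      using S L assms by (intro sum_scaleR_mem_color_cone)
        (auto simp: finite_image_iff intro!: divide_nonneg_pos)
    finally show "y \<in> color_cone chi" .
  qed
  ultimately show ?thesis
    unfolding color_triangle_def eta_def by blast
qed

lemma color_triangle_subset_convex_hull:
  fixes chi eta :: "real \<Rightarrow> real ^ 'n"
  assumes "lmin < lmax"
    and "continuous_on {0<..} chi" and "bounded (chi ` {0<..})"
    and "closure {l \<in> {0<..}. chi l \<noteq> 0} = {lmin..lmax}"
    and "continuous_on {lmin..lmax} eta"
    and "\<And>l. l \<in> {lmin<..<lmax} \<Longrightarrow> 0 < ones \<bullet> chi l"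
    and "\<And>l. l \<in> {lmin<..<lmax} \<Longrightarrow> eta l = chi l /\<^sub>R (ones \<bullet> chi l)"
  shows "color_triangle chi \<subseteq> convex hull (eta ` {lmin..lmax})"
proof -
  define C where "C = convex hull (eta ` {lmin..lmax})"
  have "eta l \<in> hyperplane_A" if "l \<in> {lmin<..<lmax}" for l
    using assms(6,7)[OF that] by (simp add: hyperplane_A_eq)
  then have "eta ` {lmin<..<lmax} \<subseteq> hyperplane_A"
    by blast
  then have "eta ` {lmin..lmax} \<subseteq> hyperplane_A"
    using image_atLeastAtMost_subset_closure_image[OF assms(5,1)]
    by (meson closed_hyperplane_A closure_minimal order_trans)
  then have "C \<subseteq> hyperplane_A"
    unfolding C_def by (simp add: hull_minimal affine_imp_convex affine_hyperplane_A)
  moreover have "closed C"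
    unfolding C_def using assms(5)
    by (intro compact_imp_closed compact_convex_hull compact_continuous_image) auto
  moreover have "\<exists>c\<ge>0. \<exists>y\<in>C. chi l = c *\<^sub>R y" if "0 < l" for l
  proof (cases "l \<in> {lmin<..<lmax}")
    case True
    have "eta l \<in> C"
      unfolding C_def by (rule hull_inc) (use True in auto)
    moreover have "chi l = (ones \<bullet> chi l) *\<^sub>R eta l"
      using assms(6,7)[OF True] by simp
    ultimately show ?thesis
      using assms(6)[OF True] less_imp_le by blast
  next
    case False
    \<comment> \<open>a nonzero value of chi would lie in the interior of its support\<close>
    then have "chi l = 0"
      using nonzero_in_interior_closure_support[OF assms(2) open_greaterThan, of l] assms(4) that
      by auto
    moreover have "eta lmin \<in> C"
      unfolding C_def by (rule hull_inc) (use assms(1) in auto)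
    ultimately show ?thesis
      by force
  qed
  ultimately show ?thesis
    unfolding C_def by (intro color_triangle_subset_closed_convex[OF assms(2,3)]) auto
qed

lemma interior_convex_hull_subset_color_triangle:
  fixes chi eta :: "real \<Rightarrow> real ^ 'n"
  assumes "0 \<le> lmin" and "lmin < lmax"
    and "continuous_on {0<..} chi" and "continuous_on {lmin..lmax} eta"
    and "\<And>l. l \<in> {lmin<..<lmax} \<Longrightarrow> 0 < ones \<bullet> chi l"
    and "\<And>l. l \<in> {lmin<..<lmax} \<Longrightarrow> eta l = chi l /\<^sub>R (ones \<bullet> chi l)"
  shows "top_of_set hyperplane_A interior_of (convex hull (eta ` {lmin..lmax}))
    \<subseteq> color_triangle chi"
proof -
  define D where "D = convex hull (eta ` {lmin<..<lmax})"
  have eta_image: "eta ` {lmin<..<lmax} = (\<lambda>l. chi l /\<^sub>R (ones \<bullet> chi l)) ` {lmin<..<lmax}"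
    using assms(6) by simp
  have D_triangle: "D \<subseteq> color_triangle chi"
    unfolding D_def eta_image
    by (rule convex_hull_normalized_subset_color_triangle) (use assms(1,3,5) in auto)
  then have "D \<subseteq> hyperplane_A"
    by (simp add: color_triangle_def)
  moreover have "convex hull (eta ` {lmin..lmax}) \<subseteq> closure D"
    using image_atLeastAtMost_subset_closure_image[OF assms(4,2)] closure_mono[OF hull_subset]
    unfolding D_def by (intro hull_minimal) auto
  ultimately have "top_of_set hyperplane_A interior_of (convex hull (eta ` {lmin..lmax}))
      \<subseteq> rel_interior D"
    by (intro interior_of_subset_rel_interior) (auto simp: D_def affine_hyperplane_A)
  with D_triangle rel_interior_subset[of D] show ?thesis
    by blast
qed

theorem lemma1:
  fixes chi :: "real \<Rightarrow> real ^ 'n"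
    and eta :: "real \<Rightarrow> real ^ 'n"
    and lmin lmax :: real
  assumes "0 \<le> lmin" and "lmin < lmax"
    and "continuous_on {0<..} chi"
    and "bounded (chi ` {0<..})"
    and "\<And>l i. 0 < l \<Longrightarrow> 0 \<le> chi l $ i"
    and "closure {l \<in> {0<..}. chi l \<noteq> 0} = {lmin..lmax}"
    and "\<And>l. l \<in> {lmin<..<lmax} \<Longrightarrow> chi l \<noteq> 0"
    and "continuous_on {lmin..lmax} eta"
    and "\<And>l. l \<in> {lmin<..<lmax} \<Longrightarrow> eta l = chi l /\<^sub>R (ones \<bullet> chi l)"
    and "interior (color_cone chi) \<noteq> {}"
  shows "(top_of_set hyperplane_A) interior_of (convex hull (eta ` {lmin..lmax}))
           \<subseteq> color_triangle chi \<and>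
         color_triangle chi \<subseteq> convex hull (eta ` {lmin..lmax})"
proof -
  have "0 < ones \<bullet> chi l" if "l \<in> {lmin<..<lmax}" for l
    using that assms(1,5,7) by (intro inner_ones_pos) auto
  then show ?thesis
    using interior_convex_hull_subset_color_triangle[of lmin lmax chi eta]
      color_triangle_subset_convex_hull[of lmin lmax chi eta] assms
    by auto
qed

end
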